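(* Let $f(z)=z+\sum_{k=2}^{\infty}a_kz^k$ be analytic in $\mathbb{D}=\{z:|z|<1\}$ with $zf'(z)-f(z)=\frac12 z^2\phi(z)$ for all $z\in\mathbb{D}$, where $\phi$ is analytic in $\mathbb{D}$ and $|\phi(z)|\le1$, and let $s_n(z;f)=z+\sum_{k=2}^n a_kz^k$. Then for each $n\ge2$, \[\left|\frac{s_n'(z;f)}{f'(z)}-1\right|\le |z|^n\left(\frac{n+1}{2n}+A_n\frac{|z|}{1-|z|}\right),\qquad |z|=r<1,\] where $A_n=\dfrac{\sqrt{2r-r^2}}{2(1-r)}\bigl(n+1+\ln(n-1)+\gamma\bigr)$ and $\gamma\approx0.57722$ is the Euler–Mascheroni constant. *)

theory Defs
  imports "HOL-Complex_Analysis.Complex_Analysis"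
begin

definition taylor_coeff :: "(complex \<Rightarrow> complex) \<Rightarrow> nat \<Rightarrow> complex" where
  "taylor_coeff f k = (deriv ^^ k) f 0 / of_nat (fact k)"

definition partial_sum :: "(complex \<Rightarrow> complex) \<Rightarrow> nat \<Rightarrow> complex \<Rightarrow> complex" where
  "partial_sum f n z = z + (\<Sum>k=2..n. taylor_coeff f k * z ^ k)"

end

(*
  Write a_k and c_k for the Taylor coefficients of f and phi at 0. Comparing coefficients in
  z f' - f = z^2 phi / 2 gives (k+1) a_(k+2) = c_k / 2, so the Taylor coefficients of f' are
  b_0 = 1 and b_j = (j+1)/(2j) c_(j-1). Bessel's inequality on the circles |w| = rho < 1 gives
  sum |c_k|^2 <= 1, and Cauchy-Schwarz then bounds the tail f' - s_n' of the series of f' by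
  (n+1)/(2n) sqrt(1 - |c_0|^2) r^n / sqrt(1 - r^2); for n = 2 the same bound controls |f'(z) - 1|.
  Since (f(w)/w)' = phi(w)/2, also |f'(z) - 1| <= r, so |f'(z)| >= 1 - r. Dividing the tail
  estimate by f'(z) leaves an elementary inequality in r and |c_0|, which already holds when
  ln(n-1) + gamma is replaced by 0.
*)
theory Submission
  imports Defs
begin

lemma taylor_coeff_0: "taylor_coeff g 0 = g 0"
  by (simp add: taylor_coeff_def)

lemma taylor_coeff_deriv: "taylor_coeff (deriv f) k = of_nat (Suc k) * taylor_coeff f (Suc k)"
proof -
  have "(deriv ^^ k) (deriv f) = (deriv ^^ Suc k) f"
    by (simp only: funpow_Suc_right comp_def)
  moreover have "fact (Suc k) = (of_nat (Suc k) :: complex) * fact k"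
    by (rule fact_Suc)
  ultimately show ?thesis
    by (simp add: taylor_coeff_def del: fact_Suc of_nat_Suc)
qed

lemma taylor_coeff_sums:
  assumes "g holomorphic_on ball 0 R" "norm z < R"
  shows "(\<lambda>k. taylor_coeff g k * z ^ k) sums g z"
  using holomorphic_power_series[OF assms(1), of z] assms(2) by (simp add: taylor_coeff_def)

lemma taylor_coeff_eq_fps_nth: "taylor_coeff f k = fps_nth (fps_expansion f 0) k"
  by (simp add: taylor_coeff_def fps_expansion_def)

lemma taylor_coeff_polynomial:
  "taylor_coeff (\<lambda>w. \<Sum>k<N. c k * w ^ k) j = (if j < N then c j else 0)"
proof -
  have "(\<lambda>w. \<Sum>k<N. c k * w ^ k) has_fps_expansion (\<Sum>k<N. fps_const (c k) * fps_X ^ k)"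
    by (intro fps_expansion_intros)
  then have "taylor_coeff (\<lambda>w. \<Sum>k<N. c k * w ^ k) j = fps_nth (\<Sum>k<N. fps_const (c k) * fps_X ^ k) j"
    by (simp add: fps_nth_fps_expansion taylor_coeff_def)
  also have "\<dots> = (\<Sum>k<N. if j = k then c k else 0)"
    by (simp add: fps_sum_nth fps_X_power_nth if_distrib[where f = "\<lambda>x. c _ * x"] cong: if_cong)
  finally show ?thesis
    by simp
qed

section \<open>Bessel's inequality on circles\<close>

lemma circlepath_mult_cnj: "circlepath 0 \<rho> x * cnj (circlepath 0 \<rho> x) = of_real (\<rho>\<^sup>2)"
proof -
  have "norm (circlepath 0 \<rho> x) = \<bar>\<rho>\<bar>"
    by (simp add: circlepath norm_mult)
  then show ?thesis
    by (metis complex_norm_square power2_abs)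
qed

lemma circlepath_integral_mult_cnj_power:
  fixes h :: "complex \<Rightarrow> complex"
  assumes hol: "h holomorphic_on ball 0 R" and \<rho>: "0 < \<rho>" "\<rho> < R"
  shows "((\<lambda>x. h (circlepath 0 \<rho> x) * cnj (circlepath 0 \<rho> x) ^ k)
           has_integral of_real (\<rho> ^ (2 * k)) * taylor_coeff h k) {0..1}"
proof -
  \<comment> \<open>On the circle \<open>1 / w = cnj w / \<rho>\<^sup>2\<close>, which turns Cauchy's formula for the
     \<open>k\<close>-th Taylor coefficient into this integral.\<close>
  define \<gamma> where "\<gamma> = circlepath 0 \<rho>"
  have "cball 0 \<rho> \<subseteq> ball 0 R"
    using \<rho> by auto
  then have "((\<lambda>u. h u / (u - 0) ^ Suc k)
               has_contour_integral (2 * pi * \<i>) / fact k * (deriv ^^ k) h 0) \<gamma>"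
    unfolding \<gamma>_def using \<rho> hol
    by (intro Cauchy_has_contour_integral_higher_derivative_circlepath)
       (auto intro: holomorphic_on_imp_continuous_on holomorphic_on_subset continuous_on_subset)
  then have "((\<lambda>x. h (\<gamma> x) / \<gamma> x ^ Suc k * vector_derivative \<gamma> (at x))
               has_integral 2 * pi * \<i> * taylor_coeff h k) {0..1}"
    by (simp add: has_contour_integral taylor_coeff_def)
  moreover have "h (\<gamma> x) / \<gamma> x ^ Suc k * vector_derivative \<gamma> (at x)
                 = 2 * pi * \<i> / of_real (\<rho> ^ (2 * k)) * (h (\<gamma> x) * cnj (\<gamma> x) ^ k)" for x
  proof -
    have "vector_derivative \<gamma> (at x) = 2 * pi * \<i> * \<gamma> x"
      unfolding \<gamma>_def vector_derivative_circlepath by (simp add: circlepath)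
    moreover have \<gamma>0: "\<gamma> x \<noteq> 0"
      using \<rho> by (simp add: \<gamma>_def circlepath)
    moreover have "cnj (\<gamma> x) = of_real (\<rho>\<^sup>2) / \<gamma> x"
      using circlepath_mult_cnj[of \<rho> x] \<gamma>0 unfolding \<gamma>_def[symmetric]
      by (simp add: eq_divide_eq mult.commute)
    then have "cnj (\<gamma> x) ^ k = of_real (\<rho> ^ (2 * k)) / \<gamma> x ^ k"
      by (simp add: power_divide power_mult)
    ultimately show ?thesis
      using \<rho> by (simp add: divide_simps)
  qed
  ultimately have "((\<lambda>x. 2 * pi * \<i> / of_real (\<rho> ^ (2 * k)) * (h (\<gamma> x) * cnj (\<gamma> x) ^ k))
                     has_integral 2 * pi * \<i> * taylor_coeff h k) {0..1}"
    by simp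
  from has_integral_mult_right[OF this, of "of_real (\<rho> ^ (2 * k)) / (2 * pi * \<i>)"]
  show ?thesis
    using \<rho> by (simp add: \<gamma>_def field_simps)
qed

lemma circlepath_integral_mult_cnj_taylor_polynomial:
  fixes h :: "complex \<Rightarrow> complex"
  assumes hol: "h holomorphic_on ball 0 R" and \<rho>: "0 < \<rho>" "\<rho> < R"
    and coeffs: "\<And>k. k < N \<Longrightarrow> taylor_coeff h k = c k"
  shows "((\<lambda>x. h (circlepath 0 \<rho> x) * cnj (\<Sum>k<N. c k * circlepath 0 \<rho> x ^ k))
           has_integral of_real (\<Sum>k<N. (norm (c k))\<^sup>2 * \<rho> ^ (2 * k))) {0..1}"
proof -
  have "((\<lambda>x. \<Sum>k<N. cnj (c k) * (h (circlepath 0 \<rho> x) * cnj (circlepath 0 \<rho> x) ^ k))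
          has_integral (\<Sum>k<N. cnj (c k) * (of_real (\<rho> ^ (2 * k)) * taylor_coeff h k))) {0..1}"
    by (intro has_integral_sum has_integral_mult_right circlepath_integral_mult_cnj_power[OF hol \<rho>])
       auto
  moreover have "(\<Sum>k<N. cnj (c k) * (of_real (\<rho> ^ (2 * k)) * taylor_coeff h k))
                 = of_real (\<Sum>k<N. (norm (c k))\<^sup>2 * \<rho> ^ (2 * k))"
  proof (unfold of_real_sum, intro sum.cong refl)
    fix k assume "k \<in> {..<N}"
    then show "cnj (c k) * (of_real (\<rho> ^ (2 * k)) * taylor_coeff h k)
               = of_real ((norm (c k))\<^sup>2 * \<rho> ^ (2 * k))"
      by (simp only: coeffs lessThan_iff of_real_mult complex_norm_square) (simp add: mult_ac)
  qed
  ultimately show ?thesis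
    by (simp add: sum_distrib_left mult_ac)
qed

lemma Bessel_inequality_circlepath:
  fixes \<phi> :: "complex \<Rightarrow> complex"
  assumes hol: "\<phi> holomorphic_on ball 0 R" and bd: "\<And>w. w \<in> ball 0 R \<Longrightarrow> norm (\<phi> w) \<le> B"
    and \<rho>: "0 < \<rho>" "\<rho> < R"
  shows "(\<Sum>k<N. (norm (taylor_coeff \<phi> k))\<^sup>2 * \<rho> ^ (2 * k)) \<le> B\<^sup>2"
proof -
  define \<gamma> where "\<gamma> = circlepath 0 \<rho>"
  define P where "P x = (\<Sum>k<N. taylor_coeff \<phi> k * \<gamma> x ^ k)" for x
  define S where "S = (\<Sum>k<N. (norm (taylor_coeff \<phi> k))\<^sup>2 * \<rho> ^ (2 * k))"
  \<comment> \<open>\<open>\<phi>\<close> and \<open>P\<close> share their first \<open>N\<close> Taylor coefficients, so both integrals are \<open>S\<close>.\<close>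
  have "((\<lambda>x. \<phi> (\<gamma> x) * cnj (P x)) has_integral of_real S) {0..1}"
    unfolding \<gamma>_def P_def S_def
    by (rule circlepath_integral_mult_cnj_taylor_polynomial[OF hol \<rho>]) simp
  moreover have "((\<lambda>x. P x * cnj (P x)) has_integral of_real S) {0..1}"
    unfolding \<gamma>_def P_def S_def
    by (rule circlepath_integral_mult_cnj_taylor_polynomial[OF _ \<rho>])
       (auto intro!: holomorphic_intros simp: taylor_coeff_polynomial)
  ultimately have "((\<lambda>x. 2 * Re (\<phi> (\<gamma> x) * cnj (P x)) - Re (P x * cnj (P x)))
                     has_integral 2 * S - S) {0..1}"
    using has_integral_linear[OF _ bounded_linear_Re, unfolded o_def]
    by (metis Re_complex_of_real has_integral_diff has_integral_mult_right)
  moreover have "((\<lambda>x. B\<^sup>2) has_integral B\<^sup>2) {0..1::real}"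
    using has_integral_const_real[of "B\<^sup>2" 0 1] by simp
  moreover have "2 * Re (\<phi> (\<gamma> x) * cnj (P x)) - Re (P x * cnj (P x)) \<le> B\<^sup>2" for x
  proof -
    have "2 * Re (\<phi> (\<gamma> x) * cnj (P x)) - Re (P x * cnj (P x))
          = (norm (\<phi> (\<gamma> x)))\<^sup>2 - (norm (\<phi> (\<gamma> x) - P x))\<^sup>2"
      by (simp only: cmod_power2) (simp add: power2_eq_square algebra_simps)
    also have "\<dots> \<le> (norm (\<phi> (\<gamma> x)))\<^sup>2"
      by simp
    also have "\<dots> \<le> B\<^sup>2"
      using \<rho> by (intro power_mono bd) (auto simp: \<gamma>_def circlepath norm_mult)
    finally show ?thesis .
  qed
  ultimately have "2 * S - S \<le> B\<^sup>2"
    by (rule has_integral_le)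
  then show ?thesis
    by (simp add: S_def)
qed

lemma Bessel_inequality_taylor_coeff:
  fixes \<phi> :: "complex \<Rightarrow> complex"
  assumes hol: "\<phi> holomorphic_on ball 0 R" and bd: "\<And>w. w \<in> ball 0 R \<Longrightarrow> norm (\<phi> w) \<le> B"
    and R: "0 < R"
  shows "(\<Sum>k<N. (norm (taylor_coeff \<phi> k))\<^sup>2 * R ^ (2 * k)) \<le> B\<^sup>2"
proof (rule tendsto_upperbound)
  show "((\<lambda>\<rho>. \<Sum>k<N. (norm (taylor_coeff \<phi> k))\<^sup>2 * \<rho> ^ (2 * k))
          \<longlongrightarrow> (\<Sum>k<N. (norm (taylor_coeff \<phi> k))\<^sup>2 * R ^ (2 * k))) (at_left R)"
    by (intro tendsto_intros)
  show "eventually (\<lambda>\<rho>. (\<Sum>k<N. (norm (taylor_coeff \<phi> k))\<^sup>2 * \<rho> ^ (2 * k)) \<le> B\<^sup>2) (at_left R)"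
    using eventually_at_left_real[OF R]
    by eventually_elim (auto intro: Bessel_inequality_circlepath[OF hol bd])
qed simp

lemma
  fixes c :: "nat \<Rightarrow> complex"
  assumes sq: "\<And>N. (\<Sum>j<N. (norm (c j))\<^sup>2) \<le> A" and p: "p \<ge> 1" and r: "0 \<le> r" "r < 1"
  shows summable_norm_power_tail: "summable (\<lambda>j. norm (c (j + p)) * r ^ (j + p))"
    and suminf_norm_power_tail_le:
      "(\<Sum>j. norm (c (j + p)) * r ^ (j + p)) \<le> sqrt (A - (norm (c 0))\<^sup>2) * r ^ p / sqrt (1 - r\<^sup>2)"
proof -
  define B where "B = sqrt (A - (norm (c 0))\<^sup>2) * r ^ p / sqrt (1 - r\<^sup>2)"
  have c0: "(norm (c 0))\<^sup>2 \<le> A"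
    using sq[of 1] by simp
  have r2: "r\<^sup>2 < 1"
    using r by (simp add: abs_square_less_1)
  have partial: "(\<Sum>j<N. norm (c (j + p)) * r ^ (j + p)) \<le> B" for N
  proof -
    have split: "(\<Sum>j<N + p. g j) = (\<Sum>j<p. g j) + (\<Sum>j<N. g (j + p))" for g :: "nat \<Rightarrow> real"
      by (induction N) (simp_all add: add.commute add.left_commute)
    have "(norm (c 0))\<^sup>2 \<le> (\<Sum>j<p. (norm (c j))\<^sup>2)"
      using p by (intro member_le_sum) auto
    then have coeffs: "(\<Sum>j<N. (norm (c (j + p)))\<^sup>2) \<le> A - (norm (c 0))\<^sup>2"
      using sq[of "N + p"] split[of "\<lambda>j. (norm (c j))\<^sup>2"] by linarith
    have "(\<Sum>j<N. (r ^ (j + p))\<^sup>2) = r ^ (2 * p) * (\<Sum>j<N. (r\<^sup>2) ^ j)"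
      by (simp add: sum_distrib_left power_add power_mult_distrib power_mult[symmetric]
                    mult.commute)
    also have "(\<Sum>j<N. (r\<^sup>2) ^ j) = (1 - (r\<^sup>2) ^ N) / (1 - r\<^sup>2)"
      using r2 by (simp add: sum_gp_strict)
    also have "\<dots> \<le> 1 / (1 - r\<^sup>2)"
      using r2 by (intro divide_right_mono) auto
    finally have powers: "(\<Sum>j<N. (r ^ (j + p))\<^sup>2) \<le> r ^ (2 * p) / (1 - r\<^sup>2)"
      using r by (simp add: mult_left_mono)
    have "(\<Sum>j<N. norm (c (j + p)) * r ^ (j + p))\<^sup>2
          \<le> (\<Sum>j<N. (norm (c (j + p)))\<^sup>2) * (\<Sum>j<N. (r ^ (j + p))\<^sup>2)"
      by (rule Cauchy_Schwarz_ineq_sum)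
    also have "\<dots> \<le> (A - (norm (c 0))\<^sup>2) * (r ^ (2 * p) / (1 - r\<^sup>2))"
      using coeffs powers c0 by (intro mult_mono) (auto intro: sum_nonneg)
    also have "\<dots> = B\<^sup>2"
      using c0 r2
      by (simp add: B_def power_mult_distrib power_divide power_mult[symmetric] mult.commute)
    finally show ?thesis
      by (rule power2_le_imp_le) (use c0 r2 r in \<open>simp add: B_def\<close>)
  qed
  show summable: "summable (\<lambda>j. norm (c (j + p)) * r ^ (j + p))"
    using r by (intro summableI_nonneg_bounded[OF _ partial]) simp
  show "(\<Sum>j. norm (c (j + p)) * r ^ (j + p)) \<le> sqrt (A - (norm (c 0))\<^sup>2) * r ^ p / sqrt (1 - r\<^sup>2)"
    using suminf_le_const[OF summable partial] by (simp add: B_def)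
qed

section \<open>The derivative of f\<close>

lemma taylor_coeff_relation:
  fixes f \<phi> :: "complex \<Rightarrow> complex"
  assumes holf: "f holomorphic_on ball 0 1" and hol\<phi>: "\<phi> holomorphic_on ball 0 1"
    and eq: "\<And>w. w \<in> ball 0 1 \<Longrightarrow> w * deriv f w - f w = w ^ 2 * \<phi> w / 2"
  shows "of_nat (Suc k) * taylor_coeff f (k + 2) = taylor_coeff \<phi> k / 2"
proof -
  define F \<Phi> where "F = fps_expansion f 0" and "\<Phi> = fps_expansion \<phi> 0"
  have F: "f has_fps_expansion F" and \<Phi>: "\<phi> has_fps_expansion \<Phi>"
    unfolding F_def \<Phi>_def using holf hol\<phi>
    by (metis has_fps_expansion_fps_expansion open_ball centre_in_ball zero_less_one)+
  have lhs: "(\<lambda>w. w * deriv f w - f w) has_fps_expansion fps_X * fps_deriv F - F"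
    using F by (intro fps_expansion_intros)
  have "eventually (\<lambda>w. 1/2 * (w ^ 2 * \<phi> w) = w * deriv f w - f w) (nhds 0)"
    using eventually_nhds_in_open[of "ball 0 1" 0] by (rule eventually_mono) (auto simp: eq)
  moreover have "(\<lambda>w. 1/2 * (w ^ 2 * \<phi> w)) has_fps_expansion fps_const (1/2) * (fps_X ^ 2 * \<Phi>)"
    using \<Phi> by (intro fps_expansion_intros)
  ultimately have rhs:
    "(\<lambda>w. w * deriv f w - f w) has_fps_expansion fps_const (1/2) * (fps_X ^ 2 * \<Phi>)"
    by (subst (asm) has_fps_expansion_cong[OF _ refl])
  have "fps_X * fps_deriv F - F = fps_const (1/2) * (fps_X ^ 2 * \<Phi>)"
    using lhs rhs by (rule fps_expansion_unique_complex)
  from arg_cong[where f = "\<lambda>G. fps_nth G (k + 2)", OF this] show ?thesis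
    by (simp add: taylor_coeff_eq_fps_nth F_def \<Phi>_def fps_X_mult_nth fps_X_power_mult_nth
                  ring_distribs)
qed

lemma deriv_sub_taylor_polynomial_le:
  fixes f \<phi> :: "complex \<Rightarrow> complex"
  assumes holf: "f holomorphic_on ball 0 1" and hol\<phi>: "\<phi> holomorphic_on ball 0 1"
    and bd\<phi>: "\<And>w. w \<in> ball 0 1 \<Longrightarrow> norm (\<phi> w) \<le> 1"
    and eq: "\<And>w. w \<in> ball 0 1 \<Longrightarrow> w * deriv f w - f w = w ^ 2 * \<phi> w / 2"
    and p: "p \<ge> 2" and z: "norm z < 1"
  shows "norm (deriv f z - (\<Sum>j<p. taylor_coeff (deriv f) j * z ^ j))
         \<le> (real p + 1) / (2 * real p) * sqrt (1 - (norm (\<phi> 0))\<^sup>2) * norm z ^ p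
            / sqrt (1 - (norm z)\<^sup>2)"
proof -
  define b c where "b = taylor_coeff (deriv f)" and "c = taylor_coeff \<phi>"
  define r K where "r = norm z" and "K = (real p + 1) / (2 * real p)"
  have "(\<lambda>j. b (j + p) * z ^ (j + p)) sums (deriv f z - (\<Sum>j<p. b j * z ^ j))"
    unfolding b_def using z
    by (intro sums_split_initial_segment taylor_coeff_sums[OF holomorphic_deriv[OF holf open_ball]])
  then have tail: "deriv f z - (\<Sum>j<p. b j * z ^ j) = (\<Sum>j. b (j + p) * z ^ (j + p))"
    by (rule sums_unique)
  have b: "b (Suc m) = of_nat (m + 2) * c m / (2 * of_nat (m + 1))" for m
  proof -
    have "taylor_coeff f (m + 2) = c m / (2 * of_nat (m + 1))"
      using taylor_coeff_relation[OF holf hol\<phi> eq, of m]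
      by (simp add: c_def field_simps del: of_nat_Suc)
    then show ?thesis
      by (simp add: b_def taylor_coeff_deriv numeral_2_eq_2 del: of_nat_Suc)
  qed
  have norm_term:
    "norm (b (j + p) * z ^ (j + p)) \<le> K * r * (norm (c (j + (p - 1))) * r ^ (j + (p - 1)))" for j
  proof -
    define m where "m = j + (p - 1)"
    have m: "j + p = Suc m" "p - 1 \<le> m"
      using p by (auto simp: m_def)
    have "norm (b (j + p)) = (real m + 2) / (2 * (real m + 1)) * norm (c m)"
      unfolding m(1) b norm_divide norm_mult norm_of_nat by (simp add: algebra_simps)
    also have "\<dots> \<le> K * norm (c m)"
      using m p by (intro mult_right_mono) (auto simp: K_def divide_simps algebra_simps)
    finally have "norm (b (j + p)) * (r * r ^ m) \<le> K * norm (c m) * (r * r ^ m)"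
      by (rule mult_right_mono) (simp add: r_def)
    then show ?thesis
      unfolding m(1) by (simp add: norm_mult norm_power r_def m_def mult_ac)
  qed
  have sq: "(\<Sum>j<N. (norm (c j))\<^sup>2) \<le> 1" for N
    using Bessel_inequality_taylor_coeff[OF hol\<phi> bd\<phi>, of N] by (simp add: c_def)
  have r: "0 \<le> r" "r < 1" and p1: "p - 1 \<ge> 1"
    using z p by (auto simp: r_def)
  have "norm (deriv f z - (\<Sum>j<p. b j * z ^ j))
        \<le> (\<Sum>j. K * r * (norm (c (j + (p - 1))) * r ^ (j + (p - 1))))"
    unfolding tail
    by (intro norm_suminf_le norm_term summable_mult summable_norm_power_tail[OF sq p1 r])
  also have "\<dots> = K * r * (\<Sum>j. norm (c (j + (p - 1))) * r ^ (j + (p - 1)))"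
    by (intro suminf_mult summable_norm_power_tail[OF sq p1 r])
  also have "\<dots> \<le> K * r * (sqrt (1 - (norm (c 0))\<^sup>2) * r ^ (p - 1) / sqrt (1 - r\<^sup>2))"
    using r by (intro mult_left_mono suminf_norm_power_tail_le[OF sq p1 r]) (auto simp: K_def)
  also have "\<dots> = K * sqrt (1 - (norm (\<phi> 0))\<^sup>2) * r ^ p / sqrt (1 - r\<^sup>2)"
    using p by (simp add: c_def taylor_coeff_0 power_eq_if[of r p])
  finally show ?thesis
    by (simp add: b_def r_def K_def)
qed

lemma norm_deriv_sub_one_le_second_order:
  fixes f \<phi> :: "complex \<Rightarrow> complex"
  assumes holf: "f holomorphic_on ball 0 1" and f'0: "deriv f 0 = 1"
    and hol\<phi>: "\<phi> holomorphic_on ball 0 1"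
    and bd\<phi>: "\<And>w. w \<in> ball 0 1 \<Longrightarrow> norm (\<phi> w) \<le> 1"
    and eq: "\<And>w. w \<in> ball 0 1 \<Longrightarrow> w * deriv f w - f w = w ^ 2 * \<phi> w / 2"
    and z: "norm z < 1"
  shows "norm (deriv f z - 1) \<le> norm (\<phi> 0) * norm z
           + 3/4 * sqrt (1 - (norm (\<phi> 0))\<^sup>2) * (norm z)\<^sup>2 / sqrt (1 - (norm z)\<^sup>2)"
proof -
  have "taylor_coeff (deriv f) 1 = \<phi> 0"
    using taylor_coeff_relation[OF holf hol\<phi> eq, of 0]
    by (simp add: taylor_coeff_deriv taylor_coeff_0 mult.commute)
  then have "(\<Sum>j<2. taylor_coeff (deriv f) j * z ^ j) = 1 + \<phi> 0 * z"
    by (simp add: numeral_2_eq_2 taylor_coeff_0 f'0)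
  then have "norm (deriv f z - (1 + \<phi> 0 * z))
             \<le> 3/4 * sqrt (1 - (norm (\<phi> 0))\<^sup>2) * (norm z)\<^sup>2 / sqrt (1 - (norm z)\<^sup>2)"
    using deriv_sub_taylor_polynomial_le[OF holf hol\<phi> bd\<phi> eq _ z, of 2] by simp
  moreover have "norm (deriv f z - 1) \<le> norm (deriv f z - (1 + \<phi> 0 * z)) + norm (\<phi> 0 * z)"
    using norm_triangle_ineq[of "deriv f z - (1 + \<phi> 0 * z)" "\<phi> 0 * z"] by simp
  ultimately show ?thesis
    by (simp add: norm_mult)
qed

lemma norm_deriv_sub_one_le:
  fixes f \<phi> :: "complex \<Rightarrow> complex"
  assumes holf: "f holomorphic_on ball 0 1" and f0: "f 0 = 0" and f'0: "deriv f 0 = 1"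
    and bd\<phi>: "\<And>w. w \<in> ball 0 1 \<Longrightarrow> norm (\<phi> w) \<le> 1"
    and eq: "\<And>w. w \<in> ball 0 1 \<Longrightarrow> w * deriv f w - f w = w ^ 2 * \<phi> w / 2"
    and z: "norm z < 1"
  shows "norm (deriv f z - 1) \<le> norm z"
proof -
  define F where "F = (\<lambda>w. if w = 0 then deriv f 0 else (f w - f 0) / (w - 0))"
  have holF: "F holomorphic_on ball 0 1"
    unfolding F_def using holf by (intro pole_lemma) auto
  have F': "deriv F w = \<phi> w / 2" if w: "w \<in> ball 0 1" "w \<noteq> 0" for w
  proof -
    have "((\<lambda>u. f u / u) has_field_derivative (deriv f w * w - f w) / w\<^sup>2) (at w)"
      using holomorphic_derivI[OF holf open_ball w(1)] w(2)
      by (auto intro!: derivative_eq_intros simp: power2_eq_square)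
    then have "(F has_field_derivative (deriv f w * w - f w) / w\<^sup>2) (at w)"
      by (rule has_field_derivative_transform_within_open[of _ _ _ "ball 0 1 - {0}"])
         (use w in \<open>auto simp: F_def f0\<close>)
    then show ?thesis
      using eq[OF w(1)] w(2) by (simp add: DERIV_imp_deriv mult.commute)
  qed
  have bound_F': "norm (deriv F w) \<le> 1/2" if w: "w \<in> ball 0 1" for w
  proof (cases "w = 0")
    case False
    then show ?thesis
      using bd\<phi>[OF w] by (simp add: F'[OF w] norm_divide)
  next
    case True
    have "isCont (deriv F) 0"
      using holomorphic_on_imp_continuous_on[OF holomorphic_deriv[OF holF open_ball]]
      by (simp add: continuous_on_eq_continuous_at)
    moreover have "eventually (\<lambda>u. u \<in> ball 0 1 - {0}) (at (0::complex))"
      by (intro eventually_at_in_open) auto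
    then have "eventually (\<lambda>u. norm (deriv F u) \<le> 1/2) (at 0)"
      by eventually_elim (use bd\<phi> in \<open>auto simp: F' norm_divide\<close>)
    ultimately show ?thesis
      using True by (intro Lim_norm_ubound[of "at 0"]) (auto simp: isCont_def)
  qed
  have "norm (F z - F 0) \<le> 1/2 * norm (z - 0)"
    using holomorphic_derivI[OF holF open_ball] bound_F' z
    by (intro field_differentiable_bound[of "ball 0 1"]) auto
  then have F_near_1: "norm (F z - 1) \<le> norm z / 2"
    by (simp add: F_def f'0)
  show ?thesis
  proof (cases "z = 0")
    case False
    have "deriv f z - 1 = (F z - 1) + z * \<phi> z / 2"
      using eq[of z] z False by (auto simp: F_def f0 field_simps power2_eq_square)
    also have "norm \<dots> \<le> norm z / 2 + norm z / 2"
      using F_near_1 bd\<phi>[of z] z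
      by (intro norm_triangle_le add_mono) (auto simp: norm_mult norm_divide mult_left_le)
    finally show ?thesis
      by simp
  qed (simp add: f'0)
qed

lemma partial_sum_eq:
  assumes "deriv f 0 = 1" "n \<ge> 1"
  shows "partial_sum f n w = (\<Sum>j<n. taylor_coeff f (Suc j) * w ^ Suc j)"
proof -
  obtain m where m: "n = Suc m"
    using assms(2) by (cases n) auto
  have shift: "(\<Sum>k=2..Suc m. g k) = (\<Sum>j<m. g (Suc (Suc j)))" for g :: "nat \<Rightarrow> complex"
    by (induction m) (simp_all add: sum.cl_ivl_Suc)
  have "taylor_coeff f 1 = 1"
    using assms(1) by (simp add: taylor_coeff_def)
  then show ?thesis
    unfolding partial_sum_def m shift sum.lessThan_Suc_shift by simp
qed

lemma deriv_partial_sum: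
  assumes "deriv f 0 = 1" "n \<ge> 1"
  shows "deriv (partial_sum f n) z = (\<Sum>j<n. taylor_coeff (deriv f) j * z ^ j)"
proof -
  have "((\<lambda>w. w ^ Suc j) has_field_derivative of_nat (Suc j) * z ^ j) (at z)" for j
    using DERIV_power[OF DERIV_ident, of "Suc j" z] by simp
  then have "(partial_sum f n has_field_derivative
               (\<Sum>j<n. taylor_coeff f (Suc j) * (of_nat (Suc j) * z ^ j))) (at z)"
    unfolding partial_sum_eq[OF assms, abs_def] by (intro DERIV_sum DERIV_cmult)
  then show ?thesis
    by (simp add: DERIV_imp_deriv taylor_coeff_deriv mult_ac)
qed

lemma mult_add_le_sqrt_sum_squares:
  fixes d r t u :: real
  assumes "t\<^sup>2 + u\<^sup>2 \<le> 1"
  shows "u * (d + t * r) \<le> sqrt (d\<^sup>2 + r\<^sup>2)"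
proof (rule real_le_rsqrt)
  have "(u * (d + t * r))\<^sup>2 \<le> (1 - t\<^sup>2) * (d + t * r)\<^sup>2"
    using assms by (simp add: power_mult_distrib mult_right_mono)
  also have "\<dots> = d\<^sup>2 + r\<^sup>2 - ((r * (1 - t\<^sup>2) - t * d)\<^sup>2 + r\<^sup>2 * t\<^sup>2)"
    by (simp add: power2_eq_square algebra_simps)
  also have "\<dots> \<le> d\<^sup>2 + r\<^sup>2"
    by (smt (verit) zero_le_power2 mult_nonneg_nonneg)
  finally show "(u * (d + t * r))\<^sup>2 \<le> d\<^sup>2 + r\<^sup>2" .
qed

lemma sqrt_sum_squares_mult_le:
  fixes r :: real
  assumes r: "0 \<le> r" "r < 1"
  shows "sqrt ((1 - r)\<^sup>2 + r\<^sup>2) * (1 - r) \<le> ((1 - r)\<^sup>2 + r * sqrt (2 * r - r\<^sup>2)) * sqrt (1 - r\<^sup>2)"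
proof (rule power2_le_imp_le)
  define d s where "d = 1 - r" and "s = sqrt (2 * r - r\<^sup>2)"
  have "r * r \<le> r"
    using r by (simp add: mult_left_le_one_le)
  then have s2: "s\<^sup>2 = 2 * r - r\<^sup>2" and r_le_s: "r \<le> s"
    using r by (auto simp: s_def power2_eq_square intro!: real_le_rsqrt)
  have "(2 - d) * (d ^ 4 + 2 * d\<^sup>2 * r\<^sup>2 + r\<^sup>2 * s\<^sup>2) - d * (d\<^sup>2 + r\<^sup>2) = 2 * r ^ 3 * (1 + d\<^sup>2)"
    unfolding s2 d_def by (simp add: power2_eq_square power3_eq_cube power4_eq_xxxx algebra_simps)
  then have poly: "d * (d\<^sup>2 + r\<^sup>2) \<le> (2 - d) * (d ^ 4 + 2 * d\<^sup>2 * r\<^sup>2 + r\<^sup>2 * s\<^sup>2)"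
    using r by (smt (verit) zero_le_power mult_nonneg_nonneg zero_le_power2)
  have "d\<^sup>2 * r\<^sup>2 \<le> d\<^sup>2 * (r * s)"
    using r_le_s r by (simp add: power2_eq_square mult_left_mono)
  then have "d ^ 4 + 2 * d\<^sup>2 * r\<^sup>2 + r\<^sup>2 * s\<^sup>2 \<le> (d\<^sup>2 + r * s)\<^sup>2"
    by (simp add: power2_eq_square power4_eq_xxxx algebra_simps)
  then have "(2 - d) * (d ^ 4 + 2 * d\<^sup>2 * r\<^sup>2 + r\<^sup>2 * s\<^sup>2) \<le> (2 - d) * (d\<^sup>2 + r * s)\<^sup>2"
    using r by (intro mult_left_mono) (auto simp: d_def)
  with poly have "d * (d\<^sup>2 + r\<^sup>2) \<le> (2 - d) * (d\<^sup>2 + r * s)\<^sup>2"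
    by linarith
  then have "d * (d * (d\<^sup>2 + r\<^sup>2)) \<le> d * ((2 - d) * (d\<^sup>2 + r * s)\<^sup>2)"
    using r by (intro mult_left_mono) (auto simp: d_def)
  moreover have "(sqrt ((1 - r)\<^sup>2 + r\<^sup>2) * (1 - r))\<^sup>2 = d * (d * (d\<^sup>2 + r\<^sup>2))"
    by (simp add: power_mult_distrib d_def power2_eq_square[of "1 - r"])
  moreover have "(((1 - r)\<^sup>2 + r * s) * sqrt (1 - r\<^sup>2))\<^sup>2 = d * ((2 - d) * (d\<^sup>2 + r * s)\<^sup>2)"
  proof -
    have "(sqrt (1 - r\<^sup>2))\<^sup>2 = 1 - r\<^sup>2"
      using r by (simp add: power_le_one)
    then show ?thesis
      by (simp only: power_mult_distrib) (simp add: d_def power2_eq_square algebra_simps)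
  qed
  ultimately show "(sqrt ((1 - r)\<^sup>2 + r\<^sup>2) * (1 - r))\<^sup>2 \<le> (((1 - r)\<^sup>2 + r * s) * sqrt (1 - r\<^sup>2))\<^sup>2"
    by simp
  show "0 \<le> ((1 - r)\<^sup>2 + r * s) * sqrt (1 - r\<^sup>2)"
    using r r_le_s by (simp add: abs_square_le_1 power_le_one)
qed

lemma tail_quotient_estimate:
  fixes r t K L :: real
  assumes r: "0 \<le> r" "r < 1" and t: "0 \<le> t" "t \<le> 1"
    and K: "0 < K" "K \<le> 3/4" and L: "3 \<le> L"
  shows "K * sqrt (1 - t\<^sup>2) / sqrt (1 - r\<^sup>2)
           * (1 + (t * r + 3/4 * sqrt (1 - t\<^sup>2) * r\<^sup>2 / sqrt (1 - r\<^sup>2)) / (1 - r))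
         \<le> K + sqrt (2 * r - r\<^sup>2) / (2 * (1 - r)) * L * (r / (1 - r))"
proof -
  define u d q s where "u = sqrt (1 - t\<^sup>2)" and "d = 1 - r" and "q = sqrt (1 - r\<^sup>2)"
    and "s = sqrt (2 * r - r\<^sup>2)"
  have tu: "t\<^sup>2 + u\<^sup>2 \<le> 1" "0 \<le> u"
    using t by (simp_all add: u_def power_le_one)
  have r2: "r\<^sup>2 < 1"
    using r by (simp add: abs_square_less_1)
  then have d: "0 < d" and q: "0 < q" and q2: "q\<^sup>2 = (1 + r) * d"
    using r by (simp_all add: d_def q_def power2_eq_square algebra_simps)
  have "r * r \<le> r"
    using r by (simp add: mult_left_le_one_le)
  then have r_le_s: "r \<le> s"
    by (simp add: s_def power2_eq_square real_le_rsqrt)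
  have linear: "u / q * ((d + t * r) / d) \<le> 1 + r * s / d\<^sup>2"
  proof -
    have "u / q * ((d + t * r) / d) = u * (d + t * r) / (q * d)"
      by simp
    also have "\<dots> \<le> sqrt (d\<^sup>2 + r\<^sup>2) / (q * d)"
      using mult_add_le_sqrt_sum_squares[OF tu(1)] q d by (intro divide_right_mono) auto
    also have "\<dots> \<le> (d\<^sup>2 + r * s) / d\<^sup>2"
      using sqrt_sum_squares_mult_le[OF r] q d
      by (simp add: d_def q_def s_def divide_simps power2_eq_square mult_ac)
    finally show ?thesis
      using d by (simp add: add_divide_distrib)
  qed
  have quadratic: "u / q * (3/4 * u * r\<^sup>2 / q / d) \<le> 3/4 * (r * s / d\<^sup>2)"
  proof -
    have "u\<^sup>2 \<le> 1"
      using tu(1) by (smt (verit) zero_le_power2)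
    have "u / q * (3/4 * u * r\<^sup>2 / q / d) = 3/4 * (u\<^sup>2 * r\<^sup>2 / (q\<^sup>2 * d))"
      by (simp add: power2_eq_square)
    also have "\<dots> \<le> 3/4 * (r\<^sup>2 / (q\<^sup>2 * d))"
      using \<open>u\<^sup>2 \<le> 1\<close> q d
      by (intro mult_left_mono divide_right_mono) (auto intro: mult_left_le_one_le)
    also have "\<dots> = 3/4 * (r\<^sup>2 / ((1 + r) * d\<^sup>2))"
      unfolding q2 by (simp add: power2_eq_square mult_ac)
    also have "\<dots> \<le> 3/4 * (r * s / d\<^sup>2)"
    proof -
      have "r\<^sup>2 \<le> r * s" "0 \<le> r * r * s"
        using r r_le_s by (auto simp: power2_eq_square mult_left_mono)
      then have "r\<^sup>2 \<le> (1 + r) * (r * s)"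
        by (simp add: algebra_simps)
      then have "r\<^sup>2 / (1 + r) \<le> r * s"
        using r by (simp add: pos_divide_le_eq mult.commute)
      then have "r\<^sup>2 / (1 + r) / d\<^sup>2 \<le> r * s / d\<^sup>2"
        by (rule divide_right_mono) simp
      then show ?thesis
        by (intro mult_left_mono) (simp_all add: divide_divide_eq_left)
    qed
    finally show ?thesis .
  qed
  have "K * u / q * (1 + (t * r + 3/4 * u * r\<^sup>2 / q) / d)
        = K * (u / q * ((d + t * r) / d) + u / q * (3/4 * u * r\<^sup>2 / q / d))"
    using d q by (simp add: field_simps)
  also have "\<dots> \<le> K * (1 + 7/4 * (r * s / d\<^sup>2))"
    using linear quadratic K by (intro mult_left_mono) auto
  also have "\<dots> \<le> K + L / 2 * (r * s / d\<^sup>2)"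
  proof -
    have "7/4 * K * (r * s / d\<^sup>2) \<le> L / 2 * (r * s / d\<^sup>2)"
      using K L r r_le_s by (intro mult_right_mono) auto
    then show ?thesis
      by (simp add: algebra_simps)
  qed
  finally show ?thesis
    by (simp add: u_def d_def q_def s_def power2_eq_square mult_ac)
qed

lemma norm_divide_sub_one_le:
  fixes F G :: complex
  assumes FG: "norm (F - G) \<le> \<alpha>" and F1: "norm (F - 1) \<le> D" and F: "1 - r \<le> norm F" and r: "r < 1"
  shows "norm (G / F - 1) \<le> \<alpha> * (1 + D / (1 - r))"
proof -
  have F0: "0 < norm F"
    using F r by linarith
  have "1 / norm F \<le> (norm F + norm (F - 1)) / norm F"
    using norm_triangle_ineq4[of F "F - 1"] F0 by (intro divide_right_mono) auto
  also have "\<dots> = 1 + norm (F - 1) / norm F"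
    using F0 by (simp add: add_divide_distrib)
  also have "\<dots> \<le> 1 + D / (1 - r)"
    using F1 F r by (intro add_left_mono frac_le) (auto intro: order_trans[OF norm_ge_zero])
  finally have inverse: "1 / norm F \<le> 1 + D / (1 - r)" .
  have "G / F - 1 = (G - F) / F"
    using F0 by (simp add: diff_divide_distrib)
  then have "norm (G / F - 1) = norm (F - G) * (1 / norm F)"
    by (simp add: norm_divide norm_minus_commute)
  also have "\<dots> \<le> \<alpha> * (1 + D / (1 - r))"
    using FG inverse F0 by (intro mult_mono) (auto intro: order_trans[OF norm_ge_zero])
  finally show ?thesis .
qed

lemma three_le_add_ln_euler_mascheroni:
  assumes "n \<ge> 2"
  shows "3 \<le> real n + 1 + ln (real n - 1) + euler_mascheroni"
proof -
  have "0 \<le> ln (real n - 1)"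
    using assms by (intro ln_ge_zero) simp
  then show ?thesis
    using assms euler_mascheroni_pos by linarith
qed

theorem theorem3p1:
  fixes f \<phi> :: "complex \<Rightarrow> complex" and n :: nat and z :: complex
  assumes holf: "f holomorphic_on ball 0 1"
    and f0: "f 0 = 0" and f'0: "deriv f 0 = 1"
    and hol\<phi>: "\<phi> holomorphic_on ball 0 1"
    and bd\<phi>: "\<And>w. w \<in> ball 0 1 \<Longrightarrow> norm (\<phi> w) \<le> 1"
    and eq: "\<And>w. w \<in> ball 0 1 \<Longrightarrow> w * deriv f w - f w = w ^ 2 * \<phi> w / 2"
    and n: "n \<ge> 2"
    and z: "norm z < 1"
  shows "norm (deriv (partial_sum f n) z / deriv f z - 1)
           \<le> norm z ^ n * ((real n + 1) / (2 * real n)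
              + (sqrt (2 * norm z - norm z ^ 2) / (2 * (1 - norm z))
                  * (real n + 1 + ln (real n - 1) + euler_mascheroni))
                * (norm z / (1 - norm z)))"
proof -
  define r t K where "r = norm z" and "t = norm (\<phi> 0)" and "K = (real n + 1) / (2 * real n)"
  define u q where "u = sqrt (1 - t\<^sup>2)" and "q = sqrt (1 - r\<^sup>2)"
  have "norm (deriv f z - deriv (partial_sum f n) z) \<le> K * u * r ^ n / q"
    using deriv_sub_taylor_polynomial_le[OF holf hol\<phi> bd\<phi> eq n z]
      deriv_partial_sum[OF f'0, of n z] n
    by (simp add: K_def u_def t_def r_def q_def)
  moreover have "norm (deriv f z - 1) \<le> t * r + 3/4 * u * r\<^sup>2 / q"
    using norm_deriv_sub_one_le_second_order[OF holf f'0 hol\<phi> bd\<phi> eq z]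
    by (simp add: t_def u_def r_def q_def)
  moreover have "1 - r \<le> norm (deriv f z)"
    using norm_deriv_sub_one_le[OF holf f0 f'0 bd\<phi> eq z] norm_triangle_ineq2[of 1 "deriv f z"]
    by (simp add: r_def norm_minus_commute)
  ultimately have "norm (deriv (partial_sum f n) z / deriv f z - 1)
                   \<le> K * u * r ^ n / q * (1 + (t * r + 3/4 * u * r\<^sup>2 / q) / (1 - r))"
    using z unfolding r_def by (rule norm_divide_sub_one_le)
  also have "\<dots> = r ^ n * (K * u / q * (1 + (t * r + 3/4 * u * r\<^sup>2 / q) / (1 - r)))"
    by simp
  also have "\<dots> \<le> r ^ n * (K + sqrt (2 * r - r\<^sup>2) / (2 * (1 - r))
                             * (real n + 1 + ln (real n - 1) + euler_mascheroni) * (r / (1 - r)))"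
    using z n bd\<phi>[of 0] unfolding u_def q_def r_def t_def K_def
    by (intro mult_left_mono tail_quotient_estimate three_le_add_ln_euler_mascheroni)
       (auto simp: field_simps)
  finally show ?thesis
    by (simp add: r_def K_def)
qed

end
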